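(* Let $f:X\to Y$ be a quasi-isometry of semimetric spaces. Then $f$ maps each $\sim$-class of $X$ quasi-isometrically into a $\sim$-class of $Y$, and this induces an isomorphism of partially ordered sets $X/\!\sim\ \to\ Y/\!\sim$.
   Context: A semimetric space is a set $X$ with $d:X\times X\to\mathbb{R}^{\ge0}\cup\{\infty\}$ such that $d(x,y)=0$ iff $x=y$ and $d(x,z)\le d(x,y)+d(y,z)$ (no symmetry assumed; arithmetic with $\infty$ as usual). A map $f:X\to Y$ is a quasi-isometry if there are constants $1\le\lambda<\infty$, $0<\epsilon<\infty$, $0\le\mu<\infty$ with $\frac1\lambda d(x,y)-\epsilon\le d(f(x),f(y))\le\lambda d(x,y)+\epsilon$ for all $x,y\in X$ and, for every $y\in Y$, some $x\in X$ with $\max(d(y,f(x)),d(f(x),y))\le\mu$. On a semimetric space define the preorder $x\lesssim y$ iff $d(y,x)<\infty$, and $x\sim y$ iff $x\lesssim y$ and $y\lesssim x$; the $\sim$-classes are the strongly connected components, and $X/\!\sim$ is the set of $\sim$-classes partially ordered by the order induced from $\lesssim$. *)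

theory Defs
  imports Main "HOL-Library.Extended_Nonnegative_Real"
begin

definition semimetric :: "'a set \<Rightarrow> ('a \<Rightarrow> 'a \<Rightarrow> ennreal) \<Rightarrow> bool" where
  "semimetric X d \<longleftrightarrow>
     (\<forall>x\<in>X. \<forall>y\<in>X. d x y = 0 \<longleftrightarrow> x = y) \<and>
     (\<forall>x\<in>X. \<forall>y\<in>X. \<forall>z\<in>X. d x z \<le> d x y + d y z)"

text \<open>The two-sided quasi-isometric inequalities with constants lam, eps.
  Subtraction in ennreal truncates at 0, which is harmless since distances
  are nonnegative.\<close>
definition qi_bounds ::
  "'a set \<Rightarrow> ('a \<Rightarrow> 'a \<Rightarrow> ennreal) \<Rightarrow> ('b \<Rightarrow> 'b \<Rightarrow> ennreal) \<Rightarrow> ('a \<Rightarrow> 'b)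
     \<Rightarrow> real \<Rightarrow> real \<Rightarrow> bool" where
  "qi_bounds X dX dY f lam eps \<longleftrightarrow>
     (\<forall>x\<in>X. \<forall>y\<in>X.
        ennreal (1 / lam) * dX x y - ennreal eps \<le> dY (f x) (f y) \<and>
        dY (f x) (f y) \<le> ennreal lam * dX x y + ennreal eps)"

definition quasi_isometry ::
  "'a set \<Rightarrow> ('a \<Rightarrow> 'a \<Rightarrow> ennreal) \<Rightarrow> 'b set \<Rightarrow> ('b \<Rightarrow> 'b \<Rightarrow> ennreal) \<Rightarrow> ('a \<Rightarrow> 'b) \<Rightarrow> bool" where
  "quasi_isometry X dX Y dY f \<longleftrightarrow>
     f ` X \<subseteq> Y \<and>
     (\<exists>lam eps mu :: real. 1 \<le> lam \<and> 0 < eps \<and> 0 \<le> mu \<and>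
        qi_bounds X dX dY f lam eps \<and>
        (\<forall>y\<in>Y. \<exists>x\<in>X. max (dY y (f x)) (dY (f x) y) \<le> ennreal mu))"

definition qi_embedding ::
  "'a set \<Rightarrow> ('a \<Rightarrow> 'a \<Rightarrow> ennreal) \<Rightarrow> 'b set \<Rightarrow> ('b \<Rightarrow> 'b \<Rightarrow> ennreal) \<Rightarrow> ('a \<Rightarrow> 'b) \<Rightarrow> bool" where
  "qi_embedding X dX Y dY f \<longleftrightarrow>
     f ` X \<subseteq> Y \<and>
     (\<exists>lam eps :: real. 1 \<le> lam \<and> 0 < eps \<and> qi_bounds X dX dY f lam eps)"

text \<open>x \<lesssim> y iff d y x < oo; x \<sim> y iff both.\<close>
definition sim_rel :: "'a set \<Rightarrow> ('a \<Rightarrow> 'a \<Rightarrow> ennreal) \<Rightarrow> ('a \<times> 'a) set" where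
  "sim_rel X d = {(x, y). x \<in> X \<and> y \<in> X \<and> d y x < \<infinity> \<and> d x y < \<infinity>}"

definition sim_classes :: "'a set \<Rightarrow> ('a \<Rightarrow> 'a \<Rightarrow> ennreal) \<Rightarrow> 'a set set" where
  "sim_classes X d = X // sim_rel X d"

text \<open>Partial order on classes induced from \<lesssim>: C \<le> D iff x \<lesssim> y for (some, equivalently all)
  representatives x \<in> C, y \<in> D.\<close>
definition class_le :: "('a \<Rightarrow> 'a \<Rightarrow> ennreal) \<Rightarrow> 'a set \<Rightarrow> 'a set \<Rightarrow> bool" where
  "class_le d C D \<longleftrightarrow> (\<exists>x\<in>C. \<exists>y\<in>D. d y x < \<infinity>)"

end

theory Submission
  imports Defs
begin

text \<open>A quasi-isometry distorts distances by a bounded factor and an additive constant, so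
  it preserves and reflects finiteness of distances; hence \<open>f\<close> respects and reflects both
  \<open>\<lesssim>\<close> and \<open>\<sim>\<close>. Therefore \<open>C \<mapsto> \<sim>``(f ` C)\<close> is a well-defined order
  embedding of \<open>X/\<sim>\<close> into \<open>Y/\<sim>\<close>, and coarse surjectivity makes it onto.\<close>

lemma semimetric_dist_self: "semimetric X d \<Longrightarrow> x \<in> X \<Longrightarrow> d x x = 0"
  unfolding semimetric_def by simp

lemma semimetric_triangle:
  "semimetric X d \<Longrightarrow> x \<in> X \<Longrightarrow> y \<in> X \<Longrightarrow> z \<in> X \<Longrightarrow> d x z \<le> d x y + d y z"
  unfolding semimetric_def by simp

lemma semimetric_finite_dist_trans:
  assumes "semimetric X d" "x \<in> X" "y \<in> X" "z \<in> X" "d x y < \<infinity>" "d y z < \<infinity>"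
  shows "d x z < \<infinity>"
proof -
  have "d x y + d y z < \<infinity>" using assms(5,6) by (simp add: less_top)
  then show ?thesis using semimetric_triangle[OF assms(1-4)] by (rule le_less_trans[rotated])
qed

lemma equiv_sim_rel: assumes "semimetric X d" shows "equiv X (sim_rel X d)"
proof (rule equivI)
  show "sim_rel X d \<subseteq> X \<times> X" unfolding sim_rel_def by auto
  show "refl_on X (sim_rel X d)"
    using semimetric_dist_self[OF assms] unfolding refl_on_def sim_rel_def by auto
  show "sym (sim_rel X d)" unfolding sym_def sim_rel_def by auto
  show "trans (sim_rel X d)"
    using semimetric_finite_dist_trans[OF assms] unfolding trans_def sim_rel_def by blast
qed

lemma class_le_iff_representatives:
  assumes "semimetric X d" "C \<in> sim_classes X d" "D \<in> sim_classes X d" "x \<in> C" "y \<in> D"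
  shows "class_le d C D \<longleftrightarrow> d y x < \<infinity>"
proof
  assume "class_le d C D"
  then obtain x' y' where x': "x' \<in> C" and y': "y' \<in> D" and "d y' x' < \<infinity>"
    unfolding class_le_def by blast
  have "(x', x) \<in> sim_rel X d" "(y, y') \<in> sim_rel X d"
    using in_quotient_imp_in_rel[OF equiv_sim_rel[OF assms(1)]] assms(2-5) x' y'
    unfolding sim_classes_def by blast+
  then have "x \<in> X" "x' \<in> X" "y \<in> X" "y' \<in> X" "d x' x < \<infinity>" "d y y' < \<infinity>"
    unfolding sim_rel_def by simp_all
  then have "d y' x < \<infinity>"
    using semimetric_finite_dist_trans[OF assms(1) \<open>y' \<in> X\<close> \<open>x' \<in> X\<close> \<open>x \<in> X\<close>]
      \<open>d y' x' < \<infinity>\<close> by blast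
  then show "d y x < \<infinity>"
    using semimetric_finite_dist_trans[OF assms(1) \<open>y \<in> X\<close> \<open>y' \<in> X\<close> \<open>x \<in> X\<close>]
      \<open>d y y' < \<infinity>\<close> by blast
qed (use assms(4,5) class_le_def in blast)

lemma qi_bounds_subset: "qi_bounds X dX dY f lam eps \<Longrightarrow> C \<subseteq> X \<Longrightarrow> qi_bounds C dX dY f lam eps"
  unfolding qi_bounds_def by blast

lemma qi_bounds_finite_dist_iff:
  assumes "qi_bounds X dX dY f lam eps" "0 < lam" "x \<in> X" "y \<in> X"
  shows "dX x y < \<infinity> \<longleftrightarrow> dY (f x) (f y) < \<infinity>"
proof
  assume "dX x y < \<infinity>"
  then have "ennreal lam * dX x y + ennreal eps < \<infinity>"
    by (simp add: ennreal_mult_less_top less_top)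
  then show "dY (f x) (f y) < \<infinity>"
    using assms(1,3,4) unfolding qi_bounds_def by (meson le_less_trans)
next
  assume fin: "dY (f x) (f y) < \<infinity>"
  show "dX x y < \<infinity>"
  proof (rule ccontr)
    assume "\<not> dX x y < \<infinity>"
    then have "ennreal (1 / lam) * dX x y - ennreal eps = \<infinity>"
      using assms(2) by (simp add: less_top[symmetric] ennreal_mult_eq_top_iff)
    moreover have "ennreal (1 / lam) * dX x y - ennreal eps \<le> dY (f x) (f y)"
      using assms(1,3,4) unfolding qi_bounds_def by blast
    ultimately show False using fin by (simp add: top_unique)
  qed
qed

lemma qi_bounds_sim_rel_iff:
  assumes "qi_bounds X dX dY f lam eps" "0 < lam" "f ` X \<subseteq> Y" "x \<in> X" "y \<in> X"
  shows "(x, y) \<in> sim_rel X dX \<longleftrightarrow> (f x, f y) \<in> sim_rel Y dY"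
  using qi_bounds_finite_dist_iff[OF assms(1,2)] assms(3-5) unfolding sim_rel_def by auto

definition induced_class_map :: "('b \<times> 'b) set \<Rightarrow> ('a \<Rightarrow> 'b) \<Rightarrow> 'a set \<Rightarrow> 'b set" where
  "induced_class_map S f C = S `` (f ` C)"

locale equiv_reflecting_map =
  fixes A :: "'a set" and R :: "('a \<times> 'a) set" and B :: "'b set" and S :: "('b \<times> 'b) set"
    and f :: "'a \<Rightarrow> 'b"
  assumes equiv_R: "equiv A R" and equiv_S: "equiv B S" and maps_to: "f ` A \<subseteq> B"
    and rel_iff: "x \<in> A \<Longrightarrow> y \<in> A \<Longrightarrow> (x, y) \<in> R \<longleftrightarrow> (f x, f y) \<in> S"
begin

lemma induced_class_map_eq:
  assumes "C \<in> A // R" "x \<in> C"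
  shows "induced_class_map S f C = S `` {f x}"
proof -
  have "x \<in> A" using assms in_quotient_imp_subset[OF equiv_R] by blast
  have class_eq: "S `` {f x'} = S `` {f x}" if "x' \<in> C" for x'
  proof -
    have "(x', x) \<in> R" "x' \<in> A"
      using that assms in_quotient_imp_in_rel[OF equiv_R] in_quotient_imp_subset[OF equiv_R]
      by blast+
    then have "(f x', f x) \<in> S" using rel_iff \<open>x \<in> A\<close> by blast
    then show ?thesis by (rule equiv_class_eq[OF equiv_S])
  qed
  have "induced_class_map S f C = (\<Union>x'\<in>C. S `` {f x'})"
    unfolding induced_class_map_def by blast
  also have "\<dots> = (\<Union>x'\<in>C. S `` {f x})" using class_eq by (rule SUP_cong[OF refl])
  also have "\<dots> = S `` {f x}" using assms(2) by auto
  finally show ?thesis .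
qed

lemma induced_class_map_in_quotient:
  assumes "C \<in> A // R"
  shows "induced_class_map S f C \<in> B // S"
proof -
  obtain x where "x \<in> C" using assms in_quotient_imp_non_empty[OF equiv_R] by blast
  moreover have "f x \<in> B" using calculation assms in_quotient_imp_subset[OF equiv_R] maps_to by blast
  ultimately show ?thesis using assms induced_class_map_eq by (simp add: quotientI)
qed

lemma image_subset_induced_class_map:
  assumes "C \<in> A // R"
  shows "f ` C \<subseteq> induced_class_map S f C"
proof
  fix y assume "y \<in> f ` C"
  then obtain x where "x \<in> C" "y = f x" by blast
  moreover have "f x \<in> B" using calculation assms in_quotient_imp_subset[OF equiv_R] maps_to by blast
  ultimately show "y \<in> induced_class_map S f C"
    using assms induced_class_map_eq equiv_class_self[OF equiv_S] by simp
qed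

lemma inj_on_induced_class_map: "inj_on (induced_class_map S f) (A // R)"
proof (rule inj_onI)
  fix C C' assume C: "C \<in> A // R" and C': "C' \<in> A // R"
    and eq: "induced_class_map S f C = induced_class_map S f C'"
  obtain x y where x: "x \<in> A" "C = R `` {x}" and y: "y \<in> A" "C' = R `` {y}"
    using C C' by (auto elim!: quotientE)
  have "x \<in> C" "y \<in> C'" using x y equiv_class_self[OF equiv_R] by auto
  then have "S `` {f x} = S `` {f y}" using eq induced_class_map_eq C C' by simp
  then have "(f x, f y) \<in> S" using eq_equiv_class_iff[OF equiv_S] maps_to x y by blast
  then show "C = C'" using rel_iff x y equiv_class_eq[OF equiv_R] by simp
qed

lemma bij_betw_induced_class_map:
  assumes coarsely_onto: "\<And>b. b \<in> B \<Longrightarrow> \<exists>a\<in>A. (b, f a) \<in> S"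
  shows "bij_betw (induced_class_map S f) (A // R) (B // S)"
proof -
  have "B // S \<subseteq> induced_class_map S f ` (A // R)"
  proof
    fix D assume "D \<in> B // S"
    obtain b where "b \<in> B" and D: "D = S `` {b}" using \<open>D \<in> B // S\<close> by (rule quotientE)
    then obtain a where "a \<in> A" and "(b, f a) \<in> S" using coarsely_onto by blast
    have C: "R `` {a} \<in> A // R" using \<open>a \<in> A\<close> by (rule quotientI)
    have "induced_class_map S f (R `` {a}) = S `` {f a}"
      using induced_class_map_eq[OF C equiv_class_self[OF equiv_R \<open>a \<in> A\<close>]] .
    also have "\<dots> = D" using D equiv_class_eq[OF equiv_S \<open>(b, f a) \<in> S\<close>] by simp
    finally show "D \<in> induced_class_map S f ` (A // R)" by (rule image_eqI[OF sym C])
  qed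
  moreover have "induced_class_map S f ` (A // R) \<subseteq> B // S"
    using induced_class_map_in_quotient by (rule image_subsetI)
  ultimately have "induced_class_map S f ` (A // R) = B // S" by (rule subset_antisym[rotated])
  then show ?thesis unfolding bij_betw_def using inj_on_induced_class_map by blast
qed

end

locale qi_bounded_map =
  fixes X :: "'a set" and dX :: "'a \<Rightarrow> 'a \<Rightarrow> ennreal"
    and Y :: "'b set" and dY :: "'b \<Rightarrow> 'b \<Rightarrow> ennreal"
    and f :: "'a \<Rightarrow> 'b" and lam eps :: real
  assumes semimetric_X: "semimetric X dX" and semimetric_Y: "semimetric Y dY"
    and f_into_Y: "f ` X \<subseteq> Y" and lam_ge_1: "1 \<le> lam" and eps_pos: "0 < eps"
    and bounds: "qi_bounds X dX dY f lam eps"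
begin

lemma lam_pos: "0 < lam"
  using lam_ge_1 by simp

sublocale equiv_reflecting_map X "sim_rel X dX" Y "sim_rel Y dY" f
  using equiv_sim_rel[OF semimetric_X] equiv_sim_rel[OF semimetric_Y] f_into_Y
    qi_bounds_sim_rel_iff[OF bounds lam_pos f_into_Y]
  by unfold_locales

abbreviation class_map :: "'a set \<Rightarrow> 'b set" where
  "class_map \<equiv> induced_class_map (sim_rel Y dY) f"

lemma class_map_qi_embedding:
  assumes "C \<in> sim_classes X dX"
  shows "f ` C \<subseteq> class_map C \<and> qi_embedding C dX (class_map C) dY f"
proof -
  have "C \<subseteq> X" using assms in_quotient_imp_subset[OF equiv_R] unfolding sim_classes_def by blast
  moreover have "f ` C \<subseteq> class_map C"
    using assms image_subset_induced_class_map unfolding sim_classes_def by blast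
  ultimately show ?thesis
    using qi_bounds_subset[OF bounds] lam_ge_1 eps_pos unfolding qi_embedding_def by blast
qed

lemma bij_betw_class_map:
  assumes "\<forall>y\<in>Y. \<exists>x\<in>X. max (dY y (f x)) (dY (f x) y) \<le> ennreal mu"
  shows "bij_betw class_map (sim_classes X dX) (sim_classes Y dY)"
  unfolding sim_classes_def
proof (rule bij_betw_induced_class_map)
  fix y assume y: "y \<in> Y"
  obtain x where "x \<in> X" and "max (dY y (f x)) (dY (f x) y) \<le> ennreal mu"
    using assms y by blast
  then have "dY y (f x) \<le> ennreal mu" "dY (f x) y \<le> ennreal mu" by simp_all
  then have "dY y (f x) < \<infinity>" "dY (f x) y < \<infinity>"
    by (auto intro: le_less_trans[OF _ ennreal_less_top])
  moreover have "f x \<in> Y" using f_into_Y \<open>x \<in> X\<close> by blast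
  ultimately have "(y, f x) \<in> sim_rel Y dY" using y unfolding sim_rel_def by simp
  then show "\<exists>x\<in>X. (y, f x) \<in> sim_rel Y dY" using \<open>x \<in> X\<close> by blast
qed

lemma class_le_class_map_iff:
  assumes C: "C \<in> sim_classes X dX" and C': "C' \<in> sim_classes X dX"
  shows "class_le dX C C' \<longleftrightarrow> class_le dY (class_map C) (class_map C')"
proof -
  obtain x y where x: "x \<in> C" and y: "y \<in> C'"
    using C C' in_quotient_imp_non_empty[OF equiv_R] unfolding sim_classes_def by blast
  have "x \<in> X" "y \<in> X"
    using C C' x y in_quotient_imp_subset[OF equiv_R] unfolding sim_classes_def by blast+
  have "class_map C \<in> sim_classes Y dY" "class_map C' \<in> sim_classes Y dY"
    using C C' induced_class_map_in_quotient unfolding sim_classes_def by blast+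
  moreover have "f x \<in> class_map C" "f y \<in> class_map C'"
    using class_map_qi_embedding C C' x y by blast+
  ultimately have "class_le dY (class_map C) (class_map C') \<longleftrightarrow> dY (f y) (f x) < \<infinity>"
    by (rule class_le_iff_representatives[OF semimetric_Y])
  also have "\<dots> \<longleftrightarrow> dX y x < \<infinity>"
    using qi_bounds_finite_dist_iff[OF bounds lam_pos \<open>y \<in> X\<close> \<open>x \<in> X\<close>] by simp
  also have "\<dots> \<longleftrightarrow> class_le dX C C'"
    using class_le_iff_representatives[OF semimetric_X C C' x y] by simp
  finally show ?thesis by simp
qed

end

theorem proposition4p4:
  fixes X :: "'a set" and dX :: "'a \<Rightarrow> 'a \<Rightarrow> ennreal"
    and Y :: "'b set" and dY :: "'b \<Rightarrow> 'b \<Rightarrow> ennreal"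
    and f :: "'a \<Rightarrow> 'b"
  assumes "semimetric X dX" and "semimetric Y dY"
    and "quasi_isometry X dX Y dY f"
  shows "\<exists>F. (\<forall>C\<in>sim_classes X dX.
                 f ` C \<subseteq> F C \<and> qi_embedding C dX (F C) dY f) \<and>
             bij_betw F (sim_classes X dX) (sim_classes Y dY) \<and>
             (\<forall>C\<in>sim_classes X dX. \<forall>C'\<in>sim_classes X dX.
                 class_le dX C C' \<longleftrightarrow> class_le dY (F C) (F C'))"
proof -
  obtain lam eps mu :: real where "1 \<le> lam" "0 < eps" "qi_bounds X dX dY f lam eps"
    and coarsely_onto: "\<forall>y\<in>Y. \<exists>x\<in>X. max (dY y (f x)) (dY (f x) y) \<le> ennreal mu"
    using assms(3) unfolding quasi_isometry_def by (elim conjE exE) (rule that, assumption+)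
  moreover have "f ` X \<subseteq> Y" using assms(3) unfolding quasi_isometry_def by (rule conjunct1)
  ultimately interpret qi_bounded_map X dX Y dY f lam eps
    using assms(1,2) by unfold_locales
  show ?thesis
  proof (intro exI[of _ class_map] conjI ballI)
    show "bij_betw class_map (sim_classes X dX) (sim_classes Y dY)"
      using coarsely_onto by (rule bij_betw_class_map)
  qed (auto dest: class_map_qi_embedding simp: class_le_class_map_iff)
qed

end
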